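(* Let $v$ be a weight on $[0,1)$ such that $\sup_{t\in[0,1)}\|C_t\|_{H^\infty_v\to H^\infty_v}<\infty$. Then $C_1$ maps $H^\infty_v$ into $H^\infty_v$ and $C_1\colon H^\infty_v\to H^\infty_v$ is continuous.
   Context: $\mathbb{D}=\{z\in\mathbb{C}:|z|<1\}$ and $H(\mathbb{D})$ is the space of holomorphic functions on $\mathbb{D}$. A weight is a continuous non-increasing function $v\colon[0,1)\to(0,\infty)$, extended to $\mathbb{D}$ by $v(z):=v(|z|)$. $H^\infty_v=\{f\in H(\mathbb{D}):\|f\|_{\infty,v}:=\sup_{z\in\mathbb{D}}|f(z)|v(z)<\infty\}$ with norm $\|\cdot\|_{\infty,v}$. For $t\in[0,1]$ the generalized Cesàro operator $C_t$ is defined on $f\in H(\mathbb{D})$ by $C_tf(0)=f(0)$ and $C_tf(z)=\frac{1}{z}\int_0^z\frac{f(\xi)}{1-t\xi}\,d\xi$ for $z\in\mathbb{D}\setminus\{0\}$; for $t\in[0,1)$, $C_t$ is a bounded operator on $H^\infty_v$. *)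

theory Defs
  imports "HOL-Complex_Analysis.Complex_Analysis"
begin

definition weight :: "(real \<Rightarrow> real) \<Rightarrow> bool" where
  "weight v \<longleftrightarrow> continuous_on {0..<1} v
     \<and> (\<forall>r\<in>{0..<1}. \<forall>s\<in>{0..<1}. r \<le> s \<longrightarrow> v s \<le> v r)
     \<and> (\<forall>r\<in>{0..<1}. 0 < v r)"

definition Hinf_v :: "(real \<Rightarrow> real) \<Rightarrow> (complex \<Rightarrow> complex) set" where
  "Hinf_v v = {f. f holomorphic_on ball 0 1
      \<and> (\<exists>C. \<forall>z\<in>ball 0 1. norm (f z) * v (norm z) \<le> C)}"

definition norm_v :: "(real \<Rightarrow> real) \<Rightarrow> (complex \<Rightarrow> complex) \<Rightarrow> real" where
  "norm_v v f = (SUP z\<in>ball 0 1. norm (f z) * v (norm z))"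

definition cesaro :: "real \<Rightarrow> (complex \<Rightarrow> complex) \<Rightarrow> complex \<Rightarrow> complex" where
  "cesaro t f z = (if z = 0 then f 0
     else (1 / z) * contour_integral (linepath 0 z) (\<lambda>\<xi>. f \<xi> / (1 - of_real t * \<xi>)))"

end

theory Submission
  imports Defs
begin

(* For fixed z in the disc, t |-> C_t f(z) is Lipschitz on [-1,1]: on the segment [0,z] the
   kernels 1/(1 - t xi) stay at distance at least 1 - |z| from their pole, uniformly in t.
   Letting t -> 1- in |C_t f(z)| v(z) <= M ||f||_v therefore gives the same bound for C_1 f.
   Holomorphy of C_1 f is a removable singularity: C_1 f(z) = (G z - G 0) / z, where G is the
   primitive of f(xi)/(1 - xi) obtained by integrating along rays from 0. *)

lemma norm_one_minus_of_real_mult_ge: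
  fixes \<xi> :: complex
  shows "1 - \<bar>t\<bar> * norm \<xi> \<le> norm (1 - of_real t * \<xi>)"
  using norm_triangle_ineq2[of 1 "of_real t * \<xi>"] by (simp add: norm_mult)

lemma one_minus_of_real_mult_nonzero:
  fixes \<xi> :: complex
  shows "\<bar>t\<bar> * norm \<xi> < 1 \<Longrightarrow> 1 - of_real t * \<xi> \<noteq> 0"
  using norm_one_minus_of_real_mult_ge[of t \<xi>] by auto

lemma norm_le_if_in_closed_segment_0: "\<xi> \<in> closed_segment 0 z \<Longrightarrow> norm \<xi> \<le> norm z"
  using segment_bound1[of \<xi> 0 z] by simp

lemma holomorphic_on_imp_continuous_on_closed_segment:
  assumes "f holomorphic_on S" "convex S" "a \<in> S" "b \<in> S"
  shows "continuous_on (closed_segment a b) f"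
  using assms by (meson closed_segment_subset continuous_on_subset holomorphic_on_imp_continuous_on)

lemma contour_integrable_cesaro_integrand:
  assumes "continuous_on (closed_segment 0 z) f" "\<bar>t\<bar> * norm z < 1"
  shows "(\<lambda>\<xi>. f \<xi> / (1 - of_real t * \<xi>)) contour_integrable_on linepath 0 z"
proof (rule contour_integrable_continuous_linepath)
  have "\<bar>t\<bar> * norm \<xi> < 1" if "\<xi> \<in> closed_segment 0 z" for \<xi>
    using mult_left_mono[OF norm_le_if_in_closed_segment_0[OF that], of "\<bar>t\<bar>"] assms(2) by simp
  then show "continuous_on (closed_segment 0 z) (\<lambda>\<xi>. f \<xi> / (1 - of_real t * \<xi>))"
    using assms(1) by (auto intro!: continuous_intros one_minus_of_real_mult_nonzero)
qed

lemma holomorphic_convex_linepath_primitive: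
  assumes "f holomorphic_on S" "convex S" "open S" "a \<in> S" "x \<in> S"
  shows "((\<lambda>x. contour_integral (linepath a x) f) has_field_derivative f x) (at x)"
proof -
  have "((\<lambda>x. contour_integral (linepath a x) f) has_field_derivative f x) (at x within S)"
  proof (rule triangle_contour_integrals_convex_primitive)
    fix b c assume "b \<in> S" "c \<in> S"
    then have "convex hull {a, b, c} \<subseteq> S"
      using assms(2,4) by (simp add: hull_minimal)
    then have "(f has_contour_integral 0) (linepath a b +++ linepath b c +++ linepath c a)"
      by (intro Cauchy_theorem_triangle holomorphic_on_subset[OF assms(1)])
    then show "contour_integral (linepath a b) f + contour_integral (linepath b c) f
        + contour_integral (linepath c a) f = 0"
      by (rule has_chain_integral_chain_integral3)
  qed (use assms in \<open>auto intro: holomorphic_on_imp_continuous_on\<close>)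
  then show ?thesis
    using at_within_open[OF assms(5,3)] by simp
qed

lemma cesaro_holomorphic:
  assumes "f holomorphic_on ball 0 1" "\<bar>t\<bar> \<le> 1"
  shows "cesaro t f holomorphic_on ball 0 1"
proof -
  define g where "g = (\<lambda>\<xi>. f \<xi> / (1 - of_real t * \<xi>))"
  define G where "G = (\<lambda>x. contour_integral (linepath 0 x) g)"
  have "1 - of_real t * \<xi> \<noteq> 0" if "\<xi> \<in> ball 0 1" for \<xi> :: complex
    using that assms(2) mult_left_le_one_le[of "norm \<xi>" "\<bar>t\<bar>"]
    by (intro one_minus_of_real_mult_nonzero) simp
  then have "g holomorphic_on ball 0 1"
    unfolding g_def using assms(1) by (auto intro!: holomorphic_intros)
  then have G': "(G has_field_derivative g x) (at x)" if "x \<in> ball 0 1" for x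
    unfolding G_def using that by (intro holomorphic_convex_linepath_primitive) auto
  then have "G holomorphic_on ball 0 1"
    by (meson holomorphic_on_open open_ball)
  then have "(\<lambda>z. if z = 0 then deriv G 0 else (G z - G 0) / (z - 0)) holomorphic_on ball 0 1"
    by (rule pole_lemma) (simp add: interior_open)
  moreover have "deriv G 0 = f 0"
    using DERIV_imp_deriv[OF G'[of 0]] by (simp add: g_def)
  then have "(\<lambda>z. if z = 0 then deriv G 0 else (G z - G 0) / (z - 0)) = cesaro t f"
    by (auto simp: fun_eq_iff cesaro_def G_def g_def)
  ultimately show ?thesis
    by simp
qed

lemma norm_cesaro_le:
  assumes "continuous_on (closed_segment 0 z) f" "\<forall>\<xi>\<in>closed_segment 0 z. norm (f \<xi>) \<le> K"
    and "norm z \<le> 1" "\<bar>t\<bar> < 1"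
  shows "norm (cesaro t f z) \<le> K / (1 - \<bar>t\<bar>)"
proof -
  have K: "0 \<le> K"
    using assms(2) norm_ge_zero order_trans by blast
  show ?thesis
  proof (cases "z = 0")
    case True
    then have "norm (cesaro t f z) \<le> K"
      using assms(2) by (simp add: cesaro_def)
    also have "\<dots> \<le> K / (1 - \<bar>t\<bar>)"
      using K assms(4) by (simp add: le_divide_eq mult_left_le)
    finally show ?thesis .
  next
    case False
    have "norm (contour_integral (linepath 0 z) (\<lambda>\<xi>. f \<xi> / (1 - of_real t * \<xi>)))
        \<le> K / (1 - \<bar>t\<bar>) * norm (z - 0)"
    proof (rule contour_integral_bound_linepath)
      show "(\<lambda>\<xi>. f \<xi> / (1 - of_real t * \<xi>)) contour_integrable_on linepath 0 z"
        using assms(1,3,4) mult_right_le_one_le[of "\<bar>t\<bar>" "norm z"]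
        by (intro contour_integrable_cesaro_integrand) auto
      fix \<xi> assume \<xi>: "\<xi> \<in> closed_segment 0 z"
      have "1 - \<bar>t\<bar> \<le> 1 - \<bar>t\<bar> * norm \<xi>"
        using norm_le_if_in_closed_segment_0[OF \<xi>] assms(3) mult_left_le[of "norm \<xi>" "\<bar>t\<bar>"]
        by simp
      also have "\<dots> \<le> norm (1 - of_real t * \<xi>)"
        by (rule norm_one_minus_of_real_mult_ge)
      finally show "norm (f \<xi> / (1 - of_real t * \<xi>)) \<le> K / (1 - \<bar>t\<bar>)"
        using assms(2,4) \<xi> K by (simp add: norm_divide frac_le)
    qed (use K assms(4) in simp)
    with False show ?thesis
      by (simp add: cesaro_def norm_mult norm_divide divide_le_eq mult.commute)
  qed
qed

lemma cesaro_integrand_diff: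
  fixes \<xi> :: complex
  assumes "1 - of_real s * \<xi> \<noteq> 0" "1 - of_real t * \<xi> \<noteq> 0"
  shows "a / (1 - of_real s * \<xi>) - a / (1 - of_real t * \<xi>)
    = a * of_real (s - t) * \<xi> / ((1 - of_real s * \<xi>) * (1 - of_real t * \<xi>))"
  using assms by (simp add: divide_simps) (simp add: algebra_simps)

lemma norm_cesaro_diff_le:
  assumes "continuous_on (closed_segment 0 z) f" "\<forall>\<xi>\<in>closed_segment 0 z. norm (f \<xi>) \<le> K"
    and "norm z < 1" "\<bar>s\<bar> \<le> 1" "\<bar>t\<bar> \<le> 1"
  shows "norm (cesaro s f z - cesaro t f z) \<le> K * \<bar>s - t\<bar> / (1 - norm z)\<^sup>2"
proof -
  have K: "0 \<le> K"
    using assms(2) norm_ge_zero order_trans by blast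
  define B where "B = K * \<bar>s - t\<bar> / (1 - norm z)\<^sup>2"
  have B: "0 \<le> B"
    unfolding B_def using K by simp
  have denominator: "1 - norm z \<le> norm (1 - of_real r * \<xi>)"
    if "\<bar>r\<bar> \<le> 1" "\<xi> \<in> closed_segment 0 z" for r \<xi>
  proof -
    have "\<bar>r\<bar> * norm \<xi> \<le> norm z"
      using norm_le_if_in_closed_segment_0[OF that(2)] that(1)
        mult_left_le_one_le[of "norm \<xi>" "\<bar>r\<bar>"]
      by simp
    then show ?thesis
      using norm_one_minus_of_real_mult_ge[of r \<xi>] by simp
  qed
  let ?g = "\<lambda>r \<xi>. f \<xi> / (1 - of_real r * \<xi>)"
  have integrable: "?g r contour_integrable_on linepath 0 z" if "\<bar>r\<bar> \<le> 1" for r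
    using assms(1,3) that mult_left_le_one_le[of "norm z" "\<bar>r\<bar>"]
    by (intro contour_integrable_cesaro_integrand) auto
  have "norm (contour_integral (linepath 0 z) (\<lambda>\<xi>. ?g s \<xi> - ?g t \<xi>)) \<le> B * norm (z - 0)"
  proof (rule contour_integral_bound_linepath)
    show "(\<lambda>\<xi>. ?g s \<xi> - ?g t \<xi>) contour_integrable_on linepath 0 z"
      using integrable assms(4,5) by (intro contour_integrable_diff)
    fix \<xi> assume \<xi>: "\<xi> \<in> closed_segment 0 z"
    have ds: "1 - norm z \<le> norm (1 - of_real s * \<xi>)"
      and dt: "1 - norm z \<le> norm (1 - of_real t * \<xi>)"
      using denominator assms(4,5) \<xi> by auto
    have "norm (?g s \<xi> - ?g t \<xi>)
        = norm (f \<xi>) * \<bar>s - t\<bar> * norm \<xi> / (norm (1 - of_real s * \<xi>) * norm (1 - of_real t * \<xi>))"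
      using ds dt assms(3)
      by (subst cesaro_integrand_diff) (auto simp: norm_mult norm_divide simp del: of_real_diff)
    also have "\<dots> \<le> K * \<bar>s - t\<bar> * 1 / ((1 - norm z) * (1 - norm z))"
    proof (rule frac_le)
      show "norm (f \<xi>) * \<bar>s - t\<bar> * norm \<xi> \<le> K * \<bar>s - t\<bar> * 1"
        using assms(2,3) K \<xi> norm_le_if_in_closed_segment_0[OF \<xi>]
        by (intro mult_mono) (auto intro: mult_right_mono)
      show "(1 - norm z) * (1 - norm z) \<le> norm (1 - of_real s * \<xi>) * norm (1 - of_real t * \<xi>)"
        using ds dt assms(3) by (intro mult_mono) auto
    qed (use K assms(3) in auto)
    finally show "norm (?g s \<xi> - ?g t \<xi>) \<le> B"
      by (simp add: B_def power2_eq_square)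
  qed (rule B)
  moreover have "cesaro s f z - cesaro t f z
      = (if z = 0 then 0 else contour_integral (linepath 0 z) (\<lambda>\<xi>. ?g s \<xi> - ?g t \<xi>) / z)"
    using contour_integral_diff[OF integrable integrable] assms(4,5)
    by (simp add: cesaro_def right_diff_distrib divide_inverse mult.commute)
  ultimately show ?thesis
    using B by (fold B_def) (auto simp: norm_divide divide_le_eq mult.commute)
qed

lemma continuous_on_cesaro_parameter:
  assumes "continuous_on (closed_segment 0 z) f" "norm z < 1"
  shows "continuous_on {-1..1} (\<lambda>t. cesaro t f z)"
proof -
  obtain K where K: "\<forall>\<xi>\<in>closed_segment 0 z. norm (f \<xi>) \<le> K"
    using compact_imp_bounded[OF compact_continuous_image[OF assms(1) compact_segment]]
    by (auto simp: bounded_iff)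
  then have "0 \<le> K"
    using norm_ge_zero order_trans by blast
  with K have "(K / (1 - norm z)\<^sup>2)-lipschitz_on {-1..1} (\<lambda>t. cesaro t f z)"
    using norm_cesaro_diff_le[OF assms(1) K assms(2)]
    by (intro lipschitz_onI) (auto simp: dist_norm)
  then show ?thesis
    by (rule lipschitz_on_continuous_on)
qed

lemma Hinf_vI:
  assumes "f holomorphic_on ball 0 1" "\<And>z. z \<in> ball 0 1 \<Longrightarrow> norm (f z) * v (norm z) \<le> C"
  shows "f \<in> Hinf_v v"
  using assms unfolding Hinf_v_def by blast

lemma Hinf_v_holomorphic: "f \<in> Hinf_v v \<Longrightarrow> f holomorphic_on ball 0 1"
  unfolding Hinf_v_def by blast

lemma norm_le_norm_v:
  assumes "f \<in> Hinf_v v" "z \<in> ball 0 1"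
  shows "norm (f z) * v (norm z) \<le> norm_v v f"
proof -
  from assms(1) obtain C where "\<forall>z\<in>ball 0 1. norm (f z) * v (norm z) \<le> C"
    unfolding Hinf_v_def by auto
  then have "bdd_above ((\<lambda>z. norm (f z) * v (norm z)) ` ball 0 1)"
    by (auto intro: bdd_aboveI2)
  then show ?thesis
    unfolding norm_v_def using assms(2) by (rule cSUP_upper2) auto
qed

lemma norm_v_le:
  assumes "\<And>z. z \<in> ball 0 1 \<Longrightarrow> norm (f z) * v (norm z) \<le> B"
  shows "norm_v v f \<le> B"
  unfolding norm_v_def using assms by (intro cSUP_least) auto

lemma Hinf_v_norm_le:
  assumes "weight v" "f \<in> Hinf_v v" "z \<in> ball 0 1" "norm \<xi> \<le> norm z"
  shows "norm (f \<xi>) \<le> norm_v v f / v (norm z)"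
proof -
  have \<xi>: "\<xi> \<in> ball 0 1"
    using assms(3,4) by simp
  have "0 < v (norm z)" "v (norm z) \<le> v (norm \<xi>)"
    using assms(1,3,4) \<xi> unfolding weight_def by auto
  moreover have "norm (f \<xi>) * v (norm \<xi>) \<le> norm_v v f"
    by (rule norm_le_norm_v[OF assms(2) \<xi>])
  ultimately show ?thesis
    by (simp add: pos_le_divide_eq) (meson mult_left_mono norm_ge_zero order_trans)
qed

lemma cesaro_in_Hinf_v:
  assumes "weight v" "f \<in> Hinf_v v" "\<bar>t\<bar> < 1"
  shows "cesaro t f \<in> Hinf_v v"
proof -
  have hol: "f holomorphic_on ball 0 1"
    using assms(2) by (rule Hinf_v_holomorphic)
  have "norm (cesaro t f z) * v (norm z) \<le> norm_v v f / (1 - \<bar>t\<bar>)" if z: "z \<in> ball 0 1" for z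
  proof -
    have "continuous_on (closed_segment 0 z) f"
      using z by (intro holomorphic_on_imp_continuous_on_closed_segment[OF hol]) auto
    then have "norm (cesaro t f z) \<le> norm_v v f / v (norm z) / (1 - \<bar>t\<bar>)"
      using z assms
      by (intro norm_cesaro_le) (auto intro!: Hinf_v_norm_le norm_le_if_in_closed_segment_0)
    moreover have "0 < v (norm z)"
      using assms(1) z unfolding weight_def by auto
    ultimately have "norm (cesaro t f z) * v (norm z)
        \<le> norm_v v f / v (norm z) / (1 - \<bar>t\<bar>) * v (norm z)"
      by (intro mult_right_mono) auto
    also have "\<dots> = norm_v v f / (1 - \<bar>t\<bar>)"
      using \<open>0 < v (norm z)\<close> by simp
    finally show ?thesis .
  qed
  with hol assms(3) show ?thesis
    by (intro Hinf_vI cesaro_holomorphic) auto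
qed

lemma norm_cesaro_one_le:
  assumes "weight v" "f \<in> Hinf_v v" "z \<in> ball 0 1"
    and "\<forall>t\<in>{0..<1}. norm_v v (cesaro t f) \<le> B"
  shows "norm (cesaro 1 f z) * v (norm z) \<le> B"
proof (rule tendsto_upperbound)
  have "continuous_on (closed_segment 0 z) f"
    using Hinf_v_holomorphic[OF assms(2)] assms(3)
    by (intro holomorphic_on_imp_continuous_on_closed_segment) auto
  then have "((\<lambda>t. cesaro t f z) \<longlongrightarrow> cesaro 1 f z) (at_left 1)"
    using assms(3) continuous_on_cesaro_parameter
    by (intro continuous_on_Icc_at_leftD[of "-1"]) auto
  then show "((\<lambda>t. norm (cesaro t f z) * v (norm z))
      \<longlongrightarrow> norm (cesaro 1 f z) * v (norm z)) (at_left 1)"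
    by (intro tendsto_intros)
  show "\<forall>\<^sub>F t in at_left 1. norm (cesaro t f z) * v (norm z) \<le> B"
    using eventually_at_left_real[OF zero_less_one]
  proof eventually_elim
    case (elim t)
    then have "norm (cesaro t f z) * v (norm z) \<le> norm_v v (cesaro t f)"
      using assms(1-3) by (intro norm_le_norm_v cesaro_in_Hinf_v) auto
    also have "\<dots> \<le> B"
      using assms(4) elim by auto
    finally show ?case .
  qed
qed (rule trivial_limit_at_left_real)

theorem proposition2p11:
  fixes v :: "real \<Rightarrow> real"
  assumes "weight v"
    and "\<exists>M. \<forall>t\<in>{0..<1}. \<forall>f\<in>Hinf_v v. norm_v v (cesaro t f) \<le> M * norm_v v f"
  shows "(\<forall>f\<in>Hinf_v v. cesaro 1 f \<in> Hinf_v v)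
    \<and> (\<exists>M. \<forall>f\<in>Hinf_v v. norm_v v (cesaro 1 f) \<le> M * norm_v v f)"
proof -
  obtain M where M: "\<forall>t\<in>{0..<1}. \<forall>f\<in>Hinf_v v. norm_v v (cesaro t f) \<le> M * norm_v v f"
    using assms(2) by blast
  have bound: "norm (cesaro 1 f z) * v (norm z) \<le> M * norm_v v f"
    if "f \<in> Hinf_v v" "z \<in> ball 0 1" for f z
    using M that by (intro norm_cesaro_one_le[OF assms(1) that]) auto
  have "cesaro 1 f \<in> Hinf_v v" if "f \<in> Hinf_v v" for f
    using Hinf_v_holomorphic[OF that] bound[OF that] by (intro Hinf_vI cesaro_holomorphic) auto
  moreover have "norm_v v (cesaro 1 f) \<le> M * norm_v v f" if "f \<in> Hinf_v v" for f
    using bound[OF that] by (rule norm_v_le)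
  ultimately show ?thesis
    by blast
qed

end
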